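(* Let $L\in(0,\infty)$ and for $k\in\mathbb{N}$ put $n_k:=\lfloor (k/L)^2\rfloor$. Let $x\in F(1/2,1)$ and $\epsilon\in(0,\infty)$ small. Then for all sufficiently large $k$, $$(1-\epsilon)\,e^{k/L}\ \le\ S_{n_k}(x)-S_{n_{k-1}}(x)\ \le\ (1+\epsilon)\Big(\frac{k}{L}\Big)^2 e^{k/L}.$$
   Context: Every $x\in(0,1)\setminus\mathbb{Q}$ has a unique infinite continued fraction expansion $x=[a_1(x),a_2(x),\dots]$ with partial quotients $a_i(x)\in\mathbb{N}=\{1,2,\dots\}$. For $n\in\mathbb{N}$ let $T_n(x):=\max\{a_k(x):1\le k\le n\}$ and $S_n(x):=\sum_{j=1}^n a_j(x)$. Define $$F(1/2,1):=\Big\{x\in(0,1)\setminus\mathbb{Q}:\ \lim_{n\to\infty}\frac{T_n(x)}{e^{\sqrt{n}}}=1\Big\}.$$ *)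

theory Defs
  imports Complex_Main
begin

definition gauss :: "real \<Rightarrow> real" where
  "gauss y = frac (1 / y)"

definition cf_pq :: "nat \<Rightarrow> real \<Rightarrow> nat" where
  "cf_pq n x = nat \<lfloor>1 / (gauss ^^ (n - 1)) x\<rfloor>"

definition cf_T :: "nat \<Rightarrow> real \<Rightarrow> nat" where
  "cf_T n x = Max {cf_pq k x | k. 1 \<le> k \<and> k \<le> n}"

definition cf_S :: "nat \<Rightarrow> real \<Rightarrow> nat" where
  "cf_S n x = (\<Sum>j=1..n. cf_pq j x)"

definition F_half_one :: "real set" where
  "F_half_one = {x. 0 < x \<and> x < 1 \<and> x \<notin> \<rat> \<and>
      ((\<lambda>n. real (cf_T n x) / exp (sqrt (real n))) \<longlonglongrightarrow> 1)}"

end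

theory Submission
  imports Defs
begin

text \<open>Since T(n) ~ exp(sqrt n) and sqrt(n(k)) = k/L + o(1), we get
  T(n(k)) ~ exp(k/L). As exp(-1/L) < 1, eventually T(n(k-1)) < T(n(k)), i.e. the block
  (n(k-1), n(k)] contains a partial quotient equal to T(n(k)); this gives the lower bound.
  The upper bound holds because S(n(k)) has n(k) <= (k/L)^2 terms, each at most T(n(k)).\<close>

lemma nat_floor_square_div_mono:
  assumes "0 < L" and "j \<le> k"
  shows "nat \<lfloor>(real j / L)^2\<rfloor> \<le> nat \<lfloor>(real k / L)^2\<rfloor>"
  using assms by (intro nat_mono floor_mono power_mono divide_right_mono) auto

lemma floor_square_tendsto_sequentially:
  assumes "0 < L"
  shows "filterlim (\<lambda>k::nat. nat \<lfloor>(real k / L)^2\<rfloor>) sequentially sequentially"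
proof -
  have "filterlim (\<lambda>k::nat. inverse L * real k) at_top sequentially"
    using assms by (intro filterlim_tendsto_pos_mult_at_top[OF tendsto_const]
        filterlim_real_sequentially) simp
  then have "filterlim (\<lambda>k::nat. (real k / L)^2) at_top sequentially"
    by (intro filterlim_compose[OF filterlim_pow_at_top[of 2]])
      (simp_all add: field_simps filterlim_ident)
  then show ?thesis
    by (intro filterlim_compose[OF filterlim_nat_sequentially]
        filterlim_compose[OF filterlim_floor_sequentially])
qed

lemma sqrt_nat_floor_square_bounds:
  fixes y :: real
  assumes "0 < y"
  shows "0 \<le> y - sqrt (nat \<lfloor>y^2\<rfloor>)" and "y - sqrt (nat \<lfloor>y^2\<rfloor>) \<le> 1 / y"
proof -
  define s where "s = sqrt (nat \<lfloor>y^2\<rfloor>)"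
  have "s \<le> sqrt (y^2)" unfolding s_def by (intro real_sqrt_le_mono) simp
  then show sy: "0 \<le> y - sqrt (nat \<lfloor>y^2\<rfloor>)" using assms unfolding s_def by simp
  have "(y - s) * y \<le> (y - s) * (y + s)"
    using sy unfolding s_def by (intro mult_left_mono) auto
  also have "\<dots> = y^2 - s^2" by (simp add: power2_eq_square algebra_simps)
  also have "\<dots> < 1" unfolding s_def by (simp add: of_nat_nat) linarith
  finally show "y - sqrt (nat \<lfloor>y^2\<rfloor>) \<le> 1 / y"
    using assms unfolding s_def by (simp add: field_simps)
qed

lemma exp_sqrt_nat_floor_square_ratio:
  assumes "0 < L"
  shows "(\<lambda>k::nat. exp (sqrt (nat \<lfloor>(real k / L)^2\<rfloor>)) / exp (real k / L)) \<longlonglongrightarrow> 1"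
proof -
  define d where "d k = real k / L - sqrt (nat \<lfloor>(real k / L)^2\<rfloor>)" for k :: nat
  have "d \<longlonglongrightarrow> 0"
  proof (rule tendsto_sandwich[of "\<lambda>_. 0" _ _ "\<lambda>k. L / real k"])
    have "0 \<le> d k \<and> d k \<le> L / real k" if "0 < k" for k
      using sqrt_nat_floor_square_bounds[of "real k / L"] that assms unfolding d_def by simp
    then show "\<forall>\<^sub>F k in sequentially. 0 \<le> d k" "\<forall>\<^sub>F k in sequentially. d k \<le> L / real k"
      unfolding eventually_sequentially by (meson less_le_trans zero_less_one)+
  qed (auto intro: lim_const_over_n)
  then have "(\<lambda>k. exp (- d k)) \<longlonglongrightarrow> exp (- 0)"
    by (intro tendsto_exp tendsto_minus)
  then show ?thesis by (simp add: d_def exp_diff [symmetric])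
qed

lemma tendsto_sampled_at_floor_squares:
  fixes a :: "nat \<Rightarrow> real"
  assumes "0 < L" and "(\<lambda>n. a n / exp (sqrt n)) \<longlonglongrightarrow> 1"
  shows "(\<lambda>k::nat. a (nat \<lfloor>(real k / L)^2\<rfloor>) / exp (real k / L)) \<longlonglongrightarrow> 1"
proof -
  let ?n = "\<lambda>k::nat. nat \<lfloor>(real k / L)^2\<rfloor>"
  have "(\<lambda>k. a (?n k) / exp (sqrt (?n k)) * (exp (sqrt (?n k)) / exp (real k / L)))
          \<longlonglongrightarrow> 1 * 1"
    by (intro tendsto_mult exp_sqrt_nat_floor_square_ratio[OF assms(1)]
        filterlim_compose[OF assms(2) floor_square_tendsto_sequentially[OF assms(1)]])
  then show ?thesis by simp
qed

lemma eventually_less_Suc_if_asymp_exp: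
  fixes a :: "nat \<Rightarrow> real"
  assumes "0 < L" and lim: "(\<lambda>k. a k / exp (real k / L)) \<longlonglongrightarrow> 1"
  shows "\<forall>\<^sub>F k in sequentially. a k < a (Suc k)"
proof -
  define c where "c = (1 + exp (- 1 / L)) / 2"
  have "exp (- 1 / L) < 1" using assms(1) by simp
  then have c: "exp (- 1 / L) < c" "c < 1" unfolding c_def by auto
  have "(\<lambda>k. a k / exp (real k / L) * exp (- 1 / L)) \<longlonglongrightarrow> 1 * exp (- 1 / L)"
    by (intro tendsto_mult lim tendsto_const)
  moreover have "a k / exp (real k / L) * exp (- 1 / L) = a k / exp (real (Suc k) / L)" for k
    by (simp add: add_divide_distrib exp_add exp_minus field_simps)
  ultimately have "(\<lambda>k. a k / exp (real (Suc k) / L)) \<longlonglongrightarrow> exp (- 1 / L)"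
    by simp
  then have "\<forall>\<^sub>F k in sequentially. a k / exp (real (Suc k) / L) < c"
    using c(1) by (rule order_tendstoD(2))
  moreover have "\<forall>\<^sub>F k in sequentially. c < a (Suc k) / exp (real (Suc k) / L)"
    using order_tendstoD(1)[OF lim c(2)] by (rule eventually_sequentially_Suc[THEN iffD2])
  ultimately show ?thesis
    by eventually_elim (metis divide_less_cancel exp_gt_zero order.strict_trans)
qed

lemma cf_T_eq_Max: "cf_T n x = Max ((\<lambda>k. cf_pq k x) ` {1..n})"
  unfolding cf_T_def by (rule arg_cong[where f = Max]) auto

lemma cf_pq_le_cf_T: "k \<in> {1..n} \<Longrightarrow> cf_pq k x \<le> cf_T n x"
  unfolding cf_T_eq_Max by (intro Max_ge) auto

lemma cf_T_attained:
  assumes "1 \<le> n"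
  obtains k where "k \<in> {1..n}" and "cf_pq k x = cf_T n x"
proof -
  have "cf_T n x \<in> (\<lambda>k. cf_pq k x) ` {1..n}"
    unfolding cf_T_eq_Max using assms by (intro Max_in) auto
  then show ?thesis using that by (auto simp: image_iff)
qed

lemma cf_S_le_mult_cf_T: "cf_S n x \<le> n * cf_T n x"
proof -
  have "cf_S n x \<le> (\<Sum>j=1..n. cf_T n x)"
    unfolding cf_S_def by (intro sum_mono cf_pq_le_cf_T)
  then show ?thesis by simp
qed

lemma cf_S_add_block:
  assumes "n \<le> m"
  shows "cf_S m x = cf_S n x + (\<Sum>j\<in>{n<..m}. cf_pq j x)"
  using assms
proof (induction m rule: dec_induct)
  case (step m)
  have "{n<..Suc m} = insert (Suc m) {n<..m}" using step by auto
  then show ?case using step by (simp add: cf_S_def)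
qed simp

lemma cf_S_add_cf_T_le:
  assumes "1 \<le> n" and "n \<le> m" and "cf_T n x < cf_T m x"
  shows "cf_S n x + cf_T m x \<le> cf_S m x"
proof -
  obtain k where k: "k \<in> {1..m}" "cf_pq k x = cf_T m x"
    using cf_T_attained assms(1,2) by (metis le_trans)
  have "n < k"
    using cf_pq_le_cf_T[of k n x] k assms(3) by (cases "k \<le> n") auto
  then have "cf_pq k x \<le> (\<Sum>j\<in>{n<..m}. cf_pq j x)"
    using k by (intro member_le_sum) auto
  then show ?thesis using cf_S_add_block[OF assms(2)] k by simp
qed

lemma cf_S_block_bounds:
  assumes "1 \<le> n" and "n \<le> m" and "cf_T n x < cf_T m x"
  shows "real (cf_T m x) \<le> real (cf_S m x) - real (cf_S n x)"
    and "real (cf_S m x) - real (cf_S n x) \<le> real m * real (cf_T m x)"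
proof -
  show "real (cf_T m x) \<le> real (cf_S m x) - real (cf_S n x)"
    using cf_S_add_cf_T_le[OF assms] by linarith
  have "real (cf_S m x) \<le> real m * real (cf_T m x)"
    using cf_S_le_mult_cf_T[of m x] by (metis of_nat_le_iff of_nat_mult)
  then show "real (cf_S m x) - real (cf_S n x) \<le> real m * real (cf_T m x)" by simp
qed

theorem corollary1:
  fixes L \<epsilon> x :: real
  assumes "0 < L" and "x \<in> F_half_one" and "0 < \<epsilon>"
  defines "nk \<equiv> (\<lambda>k::nat. nat \<lfloor>(real k / L)^2\<rfloor>)"
  shows "\<forall>\<^sub>F k in sequentially.
     (1 - \<epsilon>) * exp (real k / L) \<le> real (cf_S (nk k) x) - real (cf_S (nk (k - 1)) x) \<and>
     real (cf_S (nk k) x) - real (cf_S (nk (k - 1)) x) \<le> (1 + \<epsilon>) * (real k / L)^2 * exp (real k / L)"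
proof -
  have "(\<lambda>n. real (cf_T n x) / exp (sqrt n)) \<longlonglongrightarrow> 1"
    using assms(2) unfolding F_half_one_def by auto
  then have lim: "(\<lambda>k. real (cf_T (nk k) x) / exp (real k / L)) \<longlonglongrightarrow> 1"
    unfolding nk_def by (rule tendsto_sampled_at_floor_squares[OF assms(1)])
  have "\<forall>\<^sub>F k in sequentially. cf_T (nk k) x < cf_T (nk (Suc k)) x"
    using eventually_less_Suc_if_asymp_exp[OF assms(1) lim] by simp
  then have new_max: "\<forall>\<^sub>F k in sequentially. cf_T (nk (k - 1)) x < cf_T (nk k) x"
    by (subst eventually_sequentially_Suc[symmetric]) simp
  have "filterlim nk sequentially sequentially"
    unfolding nk_def by (rule floor_square_tendsto_sequentially[OF assms(1)])
  then have start: "\<forall>\<^sub>F k in sequentially. 1 \<le> nk (k - 1)"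
    by (subst eventually_sequentially_Suc[symmetric]) (simp add: filterlim_at_top)
  have "\<forall>\<^sub>F k in sequentially. 1 - \<epsilon> < real (cf_T (nk k) x) / exp (real k / L)"
       "\<forall>\<^sub>F k in sequentially. real (cf_T (nk k) x) / exp (real k / L) < 1 + \<epsilon>"
    using lim assms(3) by (auto intro: order_tendstoD)
  then show ?thesis using new_max start
  proof eventually_elim
    case (elim k)
    let ?E = "exp (real k / L)" and ?T = "real (cf_T (nk k) x)"
    have bounds: "(1 - \<epsilon>) * ?E \<le> ?T" "?T \<le> (1 + \<epsilon>) * ?E"
      using elim(1,2) by (simp_all add: field_simps)
    have "nk (k - 1) \<le> nk k"
      unfolding nk_def using assms(1) by (rule nat_floor_square_div_mono) simp
    note block = cf_S_block_bounds[OF elim(4) this elim(3)]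
    have "real (nk k) \<le> (real k / L)^2" unfolding nk_def by simp
    then have "real (nk k) * ?T \<le> (real k / L)^2 * ((1 + \<epsilon>) * ?E)"
      using bounds(2) by (intro mult_mono) simp_all
    then show ?case using block bounds(1) by (simp add: ac_simps)
  qed
qed

end
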